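(* In the binary model, if $\lambda\le\frac12$, then the Lebesgue measure of $S$ is $0$ almost surely.
   Context: Binary model. Let $T=\{1,2\}^*$ be the set of finite words over $\{1,2\}$ (the rooted binary tree; $v|j$ is the prefix of $v$ of length $j$). Let $\{a_v\}_{v\in T,\,|v|\ge1}$ be i.i.d. random variables with $\mathbb{P}(a_v=0)=\mathbb{P}(a_v=1)=\frac12$. Fix $\lambda\in(0,1)$. For $\omega\in\{1,2\}^{\mathbb{N}}$ put $f(\omega)=\sum_{j\ge1}a_{\omega|j}\lambda^j$. Let $\mu$ be the image under $f$ of the uniform product measure on $\{1,2\}^{\mathbb{N}}$, and $S=f(\{1,2\}^{\mathbb{N}})$ its (random, compact) support. *)

theory Defs
  imports "HOL-Probability.Probability"
begin

text \<open>Binary model. Letters 1,2 are encoded as False,True; finite words are bool lists,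
  infinite words are functions nat \<Rightarrow> bool. The prefix of length j of omega is
  map omega [0..<j].\<close>

definition label_space :: "(bool list \<Rightarrow> bool) measure" where
  "label_space = PiM UNIV (\<lambda>_. measure_pmf (bernoulli_pmf (1/2)))"

definition binary_f :: "real \<Rightarrow> (bool list \<Rightarrow> bool) \<Rightarrow> (nat \<Rightarrow> bool) \<Rightarrow> real" where
  "binary_f lam a \<omega> = (\<Sum>j. (if a (map \<omega> [0..<Suc j]) then 1 else 0) * lam ^ Suc j)"

definition binary_S :: "real \<Rightarrow> (bool list \<Rightarrow> bool) \<Rightarrow> real set" where
  "binary_S lam a = range (binary_f lam a)"

end

theory Submission
  imports Defs
begin

text \<open>The value f(omega) lies in the interval of length lam^(n+1)/(1-lam) to the right of the
  value of the word formed by the first n labels along omega. Hence S is covered by N_n such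
  intervals, where N_n is the number of words of length n realized along some path, and for
  lam \<le> 1/2 the measure of S is at most N_n 2^(-n). A fixed word of length n is realized with a
  probability p_n satisfying p_(n+1) = p_n - p_n^2/4, so E[N_n 2^(-n)] = p_n tends to 0 and, by
  Markov's inequality, inf_n N_n 2^(-n) = 0 almost surely.\<close>

lemma null_sets_lebesgue_if_interval_covers:
  fixes S :: "real set" and c :: "'a \<Rightarrow> real"
  assumes finite: "\<And>n. finite (D n)"
    and cover: "\<And>n. S \<subseteq> (\<Union>d\<in>D n. {c d .. c d + r n})"
    and nonneg: "\<And>n. 0 \<le> r n"
    and small: "\<And>e. e > 0 \<Longrightarrow> \<exists>n. real (card (D n)) * r n < e"
  shows "S \<in> null_sets lebesgue"
proof -
  have "\<exists>T. S \<subseteq> T \<and> T \<in> lmeasurable \<and> measure lebesgue T < e" if "e > 0" for e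
  proof -
    obtain n where n: "real (card (D n)) * r n < e"
      using small[OF \<open>e > 0\<close>] by blast
    let ?T = "\<Union>d\<in>D n. {c d .. c d + r n}"
    have "measure lebesgue ?T \<le> (\<Sum>d\<in>D n. measure lebesgue {c d .. c d + r n})"
      using finite by (intro measure_UNION_le) auto
    also have "\<dots> = real (card (D n)) * r n"
      using nonneg by simp
    finally show ?thesis
      using cover[of n] finite[of n] n by (intro exI[of _ ?T]) auto
  qed
  then show ?thesis
    by (simp add: negligible_outer negligible_iff_null_sets[symmetric])
qed

lemma (in product_prob_space) indep_vars_components:
  "prob_space.indep_vars (PiM I M) M (\<lambda>i x. x i) I"
proof -
  interpret P: prob_space "PiM I M"
    by (rule prob_space_PiM) (rule M.prob_space_axioms)
  show ?thesis
  proof (cases "I = {}")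
    case True
    then show ?thesis
      unfolding P.indep_vars_def P.indep_sets_def by simp
  next
    case False
    have "distr (PiM I M) (PiM I M) (\<lambda>x. \<lambda>i\<in>I. x i) = distr (PiM I M) (PiM I M) (\<lambda>x. x)"
      by (rule distr_cong) (auto simp: space_PiM PiE_def extensional_restrict)
    also have "\<dots> = PiM I M"
      by (rule distr_id)
    also have "\<dots> = (\<Pi>\<^sub>M i\<in>I. distr (PiM I M) (M i) (\<lambda>x. x i))"
      by (intro PiM_cong refl) (simp add: PiM_component)
    finally show ?thesis
      using False by (subst P.indep_vars_iff_distr_eq_PiM') (auto intro: measurable_component_singleton)
  qed
qed

lemma (in product_prob_space) indep_events_PiM_disjoint_coords:
  assumes disj: "disjoint_family_on K J" and sub: "\<And>j. j \<in> J \<Longrightarrow> K j \<subseteq> I"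
    and sets: "\<And>j. j \<in> J \<Longrightarrow> E j \<in> sets (PiM I M)"
    and local: "\<And>j x y. j \<in> J \<Longrightarrow> x \<in> space (PiM I M) \<Longrightarrow> y \<in> space (PiM I M) \<Longrightarrow>
                   (\<forall>i\<in>K j. x i = y i) \<Longrightarrow> x \<in> E j \<Longrightarrow> y \<in> E j"
  shows "prob_space.indep_events (PiM I M) E J"
proof -
  interpret P: prob_space "PiM I M"
    by (rule prob_space_PiM) (rule M.prob_space_axioms)
  obtain z where z: "z \<in> space (PiM I M)"
    using P.not_empty by blast
  \<comment> \<open>Padding with z turns E j into a preimage under restriction to K j.\<close>
  define ext where "ext j x = (\<lambda>i\<in>I. if i \<in> K j then x i else z i)" for j x
  have ext_meas: "ext j \<in> PiM (K j) M \<rightarrow>\<^sub>M PiM I M" if "j \<in> J" for j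
  proof -
    have "(\<lambda>x. if i \<in> K j then x i else z i) \<in> PiM (K j) M \<rightarrow>\<^sub>M M i" if "i \<in> I" for i
      using z that by (cases "i \<in> K j") (auto simp: space_PiM intro!: measurable_const dest: PiE_mem)
    then show ?thesis
      unfolding ext_def using z
      by (intro measurable_PiM_single') (auto simp: space_PiM)
  qed
  have ext_restrict: "ext j (restrict x (K j)) \<in> space (PiM I M) \<and> (\<forall>i\<in>K j. ext j (restrict x (K j)) i = x i)"
    if "j \<in> J" "x \<in> space (PiM I M)" for j x
    using that z sub by (auto simp: ext_def space_PiM)
  define F where "F j = {x \<in> space (PiM I M). ext j (restrict x (K j)) \<in> E j}" for j
  have "P.indep_events F J"
    unfolding F_def
    by (rule P.indep_eventsI_indep_vars[OF P.indep_vars_restrict[OF indep_vars_components sub disj]])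
       (use ext_meas sets in \<open>auto intro: measurable_sets\<close>)
  moreover have "F j = E j" if "j \<in> J" for j
  proof -
    have "ext j (restrict x (K j)) \<in> E j \<longleftrightarrow> x \<in> E j" if "x \<in> space (PiM I M)" for x
      using local[OF \<open>j \<in> J\<close> _ that] local[OF \<open>j \<in> J\<close> that] ext_restrict[OF \<open>j \<in> J\<close> that]
      by (metis (no_types, lifting))
    then show ?thesis
      unfolding F_def using sets.sets_into_space[OF sets[OF that]] by blast
  qed
  ultimately show ?thesis
    unfolding P.indep_events_def_alt using P.indep_sets_cong[of J J "\<lambda>j. {F j}" "\<lambda>j. {E j}"]
    by blast
qed

lemma (in product_prob_space) measure_Int_PiM_disjoint_coords:
  assumes "K \<inter> L = {}" "K \<subseteq> I" "L \<subseteq> I"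
    and "A \<in> sets (PiM I M)" "B \<in> sets (PiM I M)"
    and "\<And>x y. x \<in> space (PiM I M) \<Longrightarrow> y \<in> space (PiM I M) \<Longrightarrow> (\<forall>i\<in>K. x i = y i) \<Longrightarrow> x \<in> A \<Longrightarrow> y \<in> A"
    and "\<And>x y. x \<in> space (PiM I M) \<Longrightarrow> y \<in> space (PiM I M) \<Longrightarrow> (\<forall>i\<in>L. x i = y i) \<Longrightarrow> x \<in> B \<Longrightarrow> y \<in> B"
  shows "measure (PiM I M) (A \<inter> B) = measure (PiM I M) A * measure (PiM I M) B"
proof -
  interpret P: prob_space "PiM I M"
    by (rule prob_space_PiM) (rule M.prob_space_axioms)
  have "P.indep_events (case_bool A B) UNIV"
  proof (rule indep_events_PiM_disjoint_coords[where K = "case_bool K L"])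
    show "disjoint_family_on (case_bool K L) UNIV"
      using assms(1) by (auto simp: disjoint_family_on_def split: bool.split)
    show "case_bool K L j \<subseteq> I" "case_bool A B j \<in> sets (PiM I M)" for j
      using assms(2-5) by (simp_all split: bool.split)
    show "y \<in> case_bool A B j"
      if "x \<in> space (PiM I M)" "y \<in> space (PiM I M)" "\<forall>i\<in>case_bool K L j. x i = y i"
        "x \<in> case_bool A B j" for j x y
      using that assms(6,7)[of x y] by (cases j) simp_all
  qed
  then have "\<forall>J\<subseteq>UNIV. J \<noteq> {} \<longrightarrow> finite J \<longrightarrow>
      measure (PiM I M) (\<Inter>j\<in>J. case_bool A B j) = (\<Prod>j\<in>J. measure (PiM I M) (case_bool A B j))"
    unfolding P.indep_events_def by (rule conjunct2)
  from this[rule_format, of "{True, False}"] show ?thesis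
    by (simp add: Int_commute)
qed

lemma (in prob_space) AE_ex_less_if_expectation_tendsto_0:
  fixes X :: "nat \<Rightarrow> 'a \<Rightarrow> real"
  assumes int: "\<And>n. integrable M (X n)" and nonneg: "\<And>n x. x \<in> space M \<Longrightarrow> 0 \<le> X n x"
    and lim: "(\<lambda>n. expectation (X n)) \<longlonglongrightarrow> 0"
  shows "AE x in M. \<forall>e>0. \<exists>n. X n x < e"
proof -
  have "AE x in M. \<exists>n. X n x < c" if "c > 0" for c
  proof -
    let ?N = "{x \<in> space M. \<forall>n. c \<le> X n x}"
    have [measurable]: "X n \<in> borel_measurable M" for n
      using int by (rule borel_measurable_integrable)
    have N_event: "?N \<in> events"
      by measurable
    have "prob ?N \<le> expectation (X n) / c" for n
    proof -
      have "prob ?N \<le> prob {x \<in> space M. c \<le> X n x}"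
        by (rule finite_measure_mono) auto
      also have "\<dots> \<le> expectation (X n) / c"
        using nonneg that by (intro integral_Markov_inequality_measure[OF int]) auto
      finally show ?thesis .
    qed
    moreover have "(\<lambda>n. expectation (X n) / c) \<longlonglongrightarrow> 0"
      using tendsto_divide_zero[OF lim] .
    ultimately have "prob ?N \<le> 0"
      by (intro tendsto_lowerbound[of _ 0 sequentially]) auto
    then have "?N \<in> null_sets M"
      using N_event by (simp add: null_sets_def emeasure_eq_measure antisym)
    then show ?thesis
      by (rule AE_I') (auto simp: not_less)
  qed
  then have "AE x in M. \<forall>m. \<exists>n. X n x < 1 / real (Suc m)"
    by (simp add: AE_all_countable)
  then show ?thesis
  proof (rule eventually_mono, intro allI impI)
    fix x e assume "\<forall>m. \<exists>n. X n x < 1 / real (Suc m)" "(0::real) < e"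
    then show "\<exists>n. X n x < e"
      by (metis nat_approx_posE order_less_trans)
  qed
qed

text \<open>realizes a u d: d is the sequence of labels at the successive nodes of some downward path
  starting at u, the label of u itself excluded.\<close>

fun realizes :: "(bool list \<Rightarrow> bool) \<Rightarrow> bool list \<Rightarrow> bool list \<Rightarrow> bool" where
  "realizes a u [] \<longleftrightarrow> True"
| "realizes a u (x # d) \<longleftrightarrow> (\<exists>b. a (u @ [b]) = x \<and> realizes a (u @ [b]) d)"

definition realized_words :: "(bool list \<Rightarrow> bool) \<Rightarrow> nat \<Rightarrow> bool list set" where
  "realized_words a n = {d. length d = n \<and> realizes a [] d}"

definition word_value :: "real \<Rightarrow> bool list \<Rightarrow> real" where
  "word_value lam d = (\<Sum>j<length d. (if d ! j then 1 else 0) * lam ^ Suc j)"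

lemma finite_words_length: "finite {d :: bool list. length d = n}"
  using finite_lists_length_eq[of "UNIV :: bool set" n] by simp

lemma card_words_length: "card {d :: bool list. length d = n} = 2 ^ n"
  using card_lists_length_eq[of "UNIV :: bool set" n] by simp

lemma finite_realized_words: "finite (realized_words a n)"
  unfolding realized_words_def by (rule finite_subset[OF _ finite_words_length[of n]]) auto

lemma realizes_labels_along_path:
  "realizes a u (map (\<lambda>j. a (u @ take (Suc j) v)) [0..<length v])"
proof (induction v arbitrary: u)
  case (Cons b v)
  have "map (\<lambda>j. a (u @ take (Suc j) (b # v))) [0..<length (b # v)]
      = a (u @ [b]) # map (\<lambda>j. a ((u @ [b]) @ take (Suc j) v)) [0..<length v]"
    by (simp add: upt_conv_Cons map_Suc_upt[symmetric] del: upt_Suc)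
  then show ?case
    using Cons.IH[of "u @ [b]"] by (simp only: realizes.simps) blast
qed simp

lemma realizes_cong:
  assumes "\<And>w. w \<noteq> [] \<Longrightarrow> a (u @ w) = a' (u @ w)"
  shows "realizes a u d \<longleftrightarrow> realizes a' u d"
  using assms
proof (induction d arbitrary: u)
  case (Cons x d)
  have "realizes a (u @ [b]) d \<longleftrightarrow> realizes a' (u @ [b]) d" for b
    by (rule Cons.IH) (use Cons.prems[of "b # _"] in simp)
  moreover have "a (u @ [b]) = a' (u @ [b])" for b
    using Cons.prems[of "[b]"] by simp
  ultimately show ?case
    by simp
qed simp

lemma binary_f_mem_cylinder:
  fixes lam :: real
  assumes "0 < lam" "lam < 1"
  shows "\<exists>d\<in>realized_words a n. word_value lam d \<le> binary_f lam a \<omega> \<and>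
           binary_f lam a \<omega> \<le> word_value lam d + lam ^ Suc n / (1 - lam)"
proof -
  define t where "t j = (if a (map \<omega> [0..<Suc j]) then 1 else 0) * lam ^ Suc j" for j
  define d where "d = map (\<lambda>j. a (take (Suc j) (map \<omega> [0..<n]))) [0..<n]"
  have "realizes a [] d"
    using realizes_labels_along_path[of a "[]" "map \<omega> [0..<n]"] by (simp add: d_def)
  then have d: "d \<in> realized_words a n"
    by (simp add: realized_words_def d_def)
  have t_bounds: "0 \<le> t j" "t j \<le> lam ^ Suc j" for j
    using assms by (simp_all add: t_def)
  have geom: "(\<lambda>j. lam ^ Suc (j + n)) sums (lam ^ Suc n / (1 - lam))"
    using sums_mult[OF geometric_sums[of lam], of "lam ^ Suc n"] assms
    by (simp add: power_add ac_simps)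
  have "summable t"
    by (rule summable_comparison_test[OF _ summable_geometric[of lam, THEN summable_mult[of _ lam]]])
       (use assms t_bounds in \<open>auto simp: ac_simps\<close>)
  then have tail: "summable (\<lambda>j. t (j + n))"
    by simp
  have "binary_f lam a \<omega> = (\<Sum>j. t (j + n)) + word_value lam d"
    unfolding binary_f_def t_def[symmetric] suminf_split_initial_segment[OF \<open>summable t\<close>, of n]
    by (simp add: word_value_def d_def t_def take_map)
  moreover have "0 \<le> (\<Sum>j. t (j + n))"
    using tail t_bounds by (simp add: suminf_nonneg)
  moreover have "(\<Sum>j. t (j + n)) \<le> lam ^ Suc n / (1 - lam)"
    using suminf_le[OF _ tail sums_summable[OF geom]] t_bounds sums_unique[OF geom] by simp
  ultimately show ?thesis
    using d by (intro bexI[of _ d]) auto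
qed

lemma binary_S_null_if_few_realized_words:
  fixes lam :: real
  assumes "0 < lam" "lam \<le> 1/2"
    and few: "\<And>e. e > 0 \<Longrightarrow> \<exists>n. real (card (realized_words a n)) / 2 ^ n < e"
  shows "binary_S lam a \<in> null_sets lebesgue"
proof (rule null_sets_lebesgue_if_interval_covers)
  let ?r = "\<lambda>n. lam ^ Suc n / (1 - lam)"
  show "binary_S lam a \<subseteq> (\<Union>d\<in>realized_words a n. {word_value lam d .. word_value lam d + ?r n})" for n
    using binary_f_mem_cylinder[of lam a n] assms(1,2) by (auto simp: binary_S_def)
  show "0 \<le> ?r n" for n
    using assms(1,2) by simp
  have "?r n \<le> 1 / 2 ^ n" for n
  proof -
    have "lam ^ n \<le> (1/2) ^ n"
      using assms(1,2) by (intro power_mono) auto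
    moreover have "lam / (1 - lam) \<le> 1"
      using assms(2) by simp
    ultimately have "lam ^ n * (lam / (1 - lam)) \<le> (1/2) ^ n * 1"
      using assms(1,2) by (intro mult_mono) auto
    then show ?thesis
      by (simp add: field_simps)
  qed
  then have "real (card (realized_words a n)) * ?r n \<le> real (card (realized_words a n)) / 2 ^ n" for n
    using mult_left_mono[of "?r n" "1 / 2 ^ n" "real (card (realized_words a n))"] by simp
  then show "\<exists>n. real (card (realized_words a n)) * ?r n < e" if "e > 0" for e
    using few[OF that] by (meson le_less_trans)
qed (rule finite_realized_words)

lemma product_prob_space_labels:
  "product_prob_space (\<lambda>_ :: bool list. measure_pmf (bernoulli_pmf (1/2)))"
  by unfold_locales (simp add: prob_space_measure_pmf)

lemma prob_space_label_space: "prob_space label_space"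
  unfolding label_space_def by (rule prob_space_PiM) (simp add: prob_space_measure_pmf)

lemma space_label_space: "space label_space = UNIV"
  by (simp add: label_space_def space_PiM)

lemma measurable_label: "(\<lambda>a. a w) \<in> label_space \<rightarrow>\<^sub>M measure_pmf (bernoulli_pmf (1/2))"
  unfolding label_space_def by (rule measurable_component_singleton) simp

lemma sets_label_space_label: "{a. a w = x} \<in> sets label_space"
  using measurable_sets[OF measurable_label, of "{x}" w] by (simp add: space_label_space vimage_def)

lemma measure_label_space_label: "measure label_space {a. a w = x} = 1/2"
proof -
  interpret product_prob_space "\<lambda>_ :: bool list. measure_pmf (bernoulli_pmf (1/2))" UNIV
    by (rule product_prob_space_labels)
  have "measure label_space {a. a w = x} = measure label_space ((\<lambda>a. a w) -` {x} \<inter> space label_space)"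
    by (simp add: space_label_space vimage_def)
  also have "\<dots> = measure (distr label_space (measure_pmf (bernoulli_pmf (1/2))) (\<lambda>a. a w)) {x}"
    using measurable_label by (simp add: measure_distr)
  also have "distr label_space (measure_pmf (bernoulli_pmf (1/2))) (\<lambda>a. a w) = measure_pmf (bernoulli_pmf (1/2))"
    unfolding label_space_def by (simp add: PiM_component)
  finally show ?thesis
    by (cases x) (simp_all add: measure_pmf_single)
qed

lemma sets_label_space_realizes: "{a. realizes a u d} \<in> sets label_space"
proof (induction d arbitrary: u)
  case Nil
  then show ?case
    using sets.top[of label_space] by (simp add: space_label_space)
next
  case (Cons x d)
  have "{a. realizes a u (x # d)} =
      ({a. a (u @ [True]) = x} \<inter> {a. realizes a (u @ [True]) d}) \<union>
      ({a. a (u @ [False]) = x} \<inter> {a. realizes a (u @ [False]) d})"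
    by (auto simp: ex_bool_eq)
  then show ?case
    using Cons.IH sets_label_space_label by auto
qed

lemma measure_label_space_Int_disjoint_coords:
  assumes "K \<inter> L = {}" "A \<in> sets label_space" "B \<in> sets label_space"
    and "\<And>a a'. \<forall>w\<in>K. a w = a' w \<Longrightarrow> a \<in> A \<Longrightarrow> a' \<in> A"
    and "\<And>a a'. \<forall>w\<in>L. a w = a' w \<Longrightarrow> a \<in> B \<Longrightarrow> a' \<in> B"
  shows "measure label_space (A \<inter> B) = measure label_space A * measure label_space B"
  using product_prob_space.measure_Int_PiM_disjoint_coords[OF product_prob_space_labels, of K L UNIV A B]
    assms
  unfolding label_space_def[symmetric] space_label_space by blast

lemma label_and_realizes_cong:
  assumes "\<forall>w. a (v @ w) = a' (v @ w)" "a v = x \<and> realizes a v d"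
  shows "a' v = x \<and> realizes a' v d"
  using assms realizes_cong[of a v a' d] by (metis append_Nil2)

lemma measure_label_Int_realizes:
  "measure label_space ({a. a v = x} \<inter> {a. realizes a v d}) = measure label_space {a. realizes a v d} / 2"
proof -
  have "measure label_space ({a. a v = x} \<inter> {a. realizes a v d})
      = measure label_space {a. a v = x} * measure label_space {a. realizes a v d}"
  proof (rule measure_label_space_Int_disjoint_coords[of "{v}" "(\<lambda>w. v @ w) ` {w. w \<noteq> []}"])
    show "a' \<in> {a. realizes a v d}"
      if "\<forall>w\<in>(\<lambda>w. v @ w) ` {w. w \<noteq> []}. a w = a' w" "a \<in> {a. realizes a v d}" for a a'
      using that realizes_cong[of a v a' d] by auto
  qed (auto simp: sets_label_space_label sets_label_space_realizes)
  then show ?thesis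
    by (simp add: measure_label_space_label)
qed

text \<open>The word x # d is realized below u iff at one of the two children the label is x and d is
  realized below that child; these are independent events of probability p/2 each, p being the
  probability for d, so x # d is realized with probability 1 - (1 - p/2)^2.\<close>

fun realize_prob :: "nat \<Rightarrow> real" where
  "realize_prob 0 = 1"
| "realize_prob (Suc n) = realize_prob n - (realize_prob n)\<^sup>2 / 4"

lemma measure_realizes: "measure label_space {a. realizes a u d} = realize_prob (length d)"
proof (induction d arbitrary: u)
  case Nil
  interpret prob_space label_space
    by (rule prob_space_label_space)
  show ?case
    using prob_space by (simp add: space_label_space)
next
  case (Cons x d)
  interpret prob_space label_space
    by (rule prob_space_label_space)
  define C where "C b = {a. a (u @ [b]) = x} \<inter> {a. realizes a (u @ [b]) d}" for b
  have C_sets: "C b \<in> events" for b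
    unfolding C_def using sets_label_space_label sets_label_space_realizes by blast
  have C_local: "a' \<in> C b" if "\<forall>w\<in>range (\<lambda>w. u @ [b] @ w). a w = a' w" "a \<in> C b" for a a' b
    using that label_and_realizes_cong[of a "u @ [b]" a' x d] by (simp add: C_def)
  have prob_C: "prob (C b) = realize_prob (length d) / 2" for b
    unfolding C_def by (simp add: measure_label_Int_realizes Cons.IH)
  have "prob (C True \<inter> C False) = prob (C True) * prob (C False)"
    by (rule measure_label_space_Int_disjoint_coords[of "range (\<lambda>w. u @ [True] @ w)"
          "range (\<lambda>w. u @ [False] @ w)"]) (auto simp: C_sets C_local)
  moreover have "{a. realizes a u (x # d)} = C True \<union> C False"
    by (auto simp: C_def ex_bool_eq)
  ultimately show ?case
    using C_sets by (simp add: measure_Un3 fmeasurable_eq_sets prob_C power2_eq_square)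
qed

lemma realize_prob_bounds: "0 \<le> realize_prob n \<and> realize_prob n \<le> 1"
proof (induction n)
  case (Suc n)
  let ?p = "realize_prob n"
  have "realize_prob (Suc n) = ?p * (1 - ?p / 4)"
    by (simp add: power2_eq_square algebra_simps)
  moreover have "0 \<le> ?p * (1 - ?p / 4)" "?p * (1 - ?p / 4) \<le> ?p"
    using Suc.IH by (simp_all add: mult_left_le)
  ultimately show ?case
    using Suc.IH by simp
qed simp

lemma realize_prob_tendsto_0: "realize_prob \<longlonglongrightarrow> 0"
proof -
  have "decseq realize_prob"
    by (rule decseq_SucI) simp
  then obtain L where L: "realize_prob \<longlonglongrightarrow> L"
    using decseq_convergent[of realize_prob 0] realize_prob_bounds by blast
  have "(\<lambda>n. realize_prob (Suc n)) \<longlonglongrightarrow> L - L\<^sup>2 / 4"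
    unfolding realize_prob.simps by (intro tendsto_intros L) simp
  with LIMSEQ_Suc[OF L] have "L = L - L\<^sup>2 / 4"
    by (rule LIMSEQ_unique)
  then have "L = 0"
    by simp
  with L show ?thesis
    by simp
qed

lemma card_realized_words_eq_sum:
  "real (card (realized_words a n)) = (\<Sum>d\<in>{d. length d = n}. indicator {a. realizes a [] d} a)"
  by (simp add: indicator_def realized_words_def finite_words_length Int_def)

lemma AE_few_realized_words:
  "AE a in label_space. \<forall>e>0. \<exists>n. real (card (realized_words a n)) / 2 ^ n < e"
proof -
  interpret prob_space label_space
    by (rule prob_space_label_space)
  define X :: "nat \<Rightarrow> (bool list \<Rightarrow> bool) \<Rightarrow> real"
    where "X n a = (\<Sum>d\<in>{d. length d = n}. indicator {a. realizes a [] d} a) / 2 ^ n" for n a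
  have indicator_int: "integrable label_space (indicator {a. realizes a [] d} :: _ \<Rightarrow> real)" for d
    using sets_label_space_realizes by (intro integrable_real_indicator) (auto simp: less_top[symmetric])
  then have "integrable label_space (X n)" for n
    unfolding X_def by (intro integrable_divide Bochner_Integration.integrable_sum)
  moreover have "expectation (X n) = realize_prob n" for n
    unfolding X_def using indicator_int sets_label_space_realizes
    by (simp add: measure_realizes card_words_length)
  moreover have "0 \<le> X n a" for n a
    unfolding X_def by (simp add: sum_nonneg)
  ultimately have "AE a in label_space. \<forall>e>0. \<exists>n. X n a < e"
    by (intro AE_ex_less_if_expectation_tendsto_0) (simp_all add: realize_prob_tendsto_0)
  then show ?thesis
    by (simp add: X_def card_realized_words_eq_sum)
qed

theorem proposition1p8:
  fixes lam :: real
  assumes "0 < lam" and "lam \<le> 1/2"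
  shows "AE a in label_space. binary_S lam a \<in> null_sets lebesgue"
proof -
  have null: "binary_S lam a \<in> null_sets lebesgue"
    if "\<forall>e>0. \<exists>n. real (card (realized_words a n)) / 2 ^ n < e" for a
    using assms that by (intro binary_S_null_if_few_realized_words) auto
  show ?thesis
    using AE_few_realized_words by eventually_elim (rule null)
qed

end
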